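(* Let $t$ be a normal term, $y$ a $\lambda$-variable with $y\notin Fv(t)$, $a$ a $\mu$-variable, $\sigma=[a:=^*y]$, and $A,B,C$ types. If $\Gamma,y:A\vdash t\sigma:B;\Delta,a:C$, then $\Gamma\vdash t:B;\Delta,a:A\to C$.
   Context: $\lambda\mu$-terms: $t::= x\mid \lambda x.t\mid (t\;t)\mid \mu a.t\mid (a\;t)$ over disjoint infinite sets of $\lambda$-variables and $\mu$-variables; $Fv(t)$ is the set of free variables; a term is normal if it has no redex of the forms $(\lambda x.u\;v)$ or $(\mu b.u\;v)$. $t[a:=^*y]$ is obtained from $t$ by replacing inductively each subterm $(a\;w)$ by $(a\;(w\;y))$. Types are built from propositional variables and $\perp$ with $\to$. Typing rules for $\Gamma\vdash t:A;\Delta$: (ax) $\Gamma\vdash x:A;\Delta$ if $x:A\in\Gamma$; ($\to_i$) from $\Gamma,x:A\vdash t:B;\Delta$ infer $\Gamma\vdash\lambda x.t:A\to B;\Delta$; ($\to_e$) from $\Gamma\vdash u:A\to B;\Delta$, $\Gamma\vdash v:A;\Delta$ infer $\Gamma\vdash(u\;v):B;\Delta$; ($\mu$) from $\Gamma\vdash t:\perp;\Delta,b:A$ infer $\Gamma\vdash\mu b.t:A;\Delta$; ($\perp$) from $\Gamma\vdash t:A;\Delta,b:A$ infer $\Gamma\vdash(b\;t):\perp;\Delta,b:A$. *)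

theory Defs
  imports Main
begin

(* lambda-mu terms; lambda-variables and mu-variables are nats in separate constructors *)
datatype trm =
    Var nat
  | Lam nat trm
  | App trm trm
  | Mu nat trm
  | Named nat trm

datatype ty = Atom nat | Bot | Arr ty ty

primrec fvl :: "trm \<Rightarrow> nat set" where
  "fvl (Var x) = {x}"
| "fvl (Lam x t) = fvl t - {x}"
| "fvl (App u v) = fvl u \<union> fvl v"
| "fvl (Mu b t) = fvl t"
| "fvl (Named b t) = fvl t"

primrec avl :: "trm \<Rightarrow> nat set" where
  "avl (Var x) = {x}"
| "avl (Lam x t) = insert x (avl t)"
| "avl (App u v) = avl u \<union> avl v"
| "avl (Mu b t) = avl t"
| "avl (Named b t) = avl t"

definition swp :: "nat \<Rightarrow> nat \<Rightarrow> nat \<Rightarrow> nat" where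
  "swp x z v = (if v = x then z else if v = z then x else v)"

primrec vswap :: "nat \<Rightarrow> nat \<Rightarrow> trm \<Rightarrow> trm" where
  "vswap x z (Var v) = Var (swp x z v)"
| "vswap x z (Lam v t) = Lam (swp x z v) (vswap x z t)"
| "vswap x z (App u v) = App (vswap x z u) (vswap x z v)"
| "vswap x z (Mu b t) = Mu b (vswap x z t)"
| "vswap x z (Named b t) = Named b (vswap x z t)"

lemma size_vswap[simp]: "size (vswap x z t) = size t"
  by (induction t) auto

definition fresh_for :: "nat \<Rightarrow> trm \<Rightarrow> nat" where
  "fresh_for y t = Suc (Max (insert y (avl t)))"

(* t[a :=* y]: replace every (free) subterm (a w) by (a (w y)), capture-avoiding *)
function msubst :: "nat \<Rightarrow> nat \<Rightarrow> trm \<Rightarrow> trm" where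
  "msubst a y (Var x) = Var x"
| "msubst a y (Lam x t) =
     (if x = y then (let z = fresh_for y t in Lam z (msubst a y (vswap x z t)))
      else Lam x (msubst a y t))"
| "msubst a y (App u v) = App (msubst a y u) (msubst a y v)"
| "msubst a y (Mu b t) = (if b = a then Mu b t else Mu b (msubst a y t))"
| "msubst a y (Named b t) =
     (if b = a then Named b (App (msubst a y t) (Var y)) else Named b (msubst a y t))"
  by pat_completeness auto
termination
  by (relation "measure (\<lambda>(a, y, t). size t)") auto

fun normal :: "trm \<Rightarrow> bool" where
  "normal (Var x) = True"
| "normal (Lam x t) = normal t"
| "normal (App (Lam x u) v) = False"
| "normal (App (Mu b u) v) = False"
| "normal (App u v) = (normal u \<and> normal v)"
| "normal (Mu b t) = normal t"
| "normal (Named b t) = normal t"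

inductive typing :: "(nat \<rightharpoonup> ty) \<Rightarrow> trm \<Rightarrow> ty \<Rightarrow> (nat \<rightharpoonup> ty) \<Rightarrow> bool" where
  ax: "\<Gamma> x = Some A \<Longrightarrow> typing \<Gamma> (Var x) A \<Delta>"
| impI: "typing (\<Gamma>(x \<mapsto> A)) t B \<Delta> \<Longrightarrow> typing \<Gamma> (Lam x t) (Arr A B) \<Delta>"
| impE: "typing \<Gamma> u (Arr A B) \<Delta> \<Longrightarrow> typing \<Gamma> v A \<Delta> \<Longrightarrow> typing \<Gamma> (App u v) B \<Delta>"
| mu: "typing \<Gamma> t Bot (\<Delta>(b \<mapsto> A)) \<Longrightarrow> typing \<Gamma> (Mu b t) A \<Delta>"
| bot: "\<Delta> b = Some A \<Longrightarrow> typing \<Gamma> t A \<Delta> \<Longrightarrow> typing \<Gamma> (Named b t) Bot \<Delta>"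

end

theory Submission
  imports Defs
begin

text \<open>Typing is inverted along the structure of \<open>t\<close>: every subterm \<open>(a w)\<close> of \<open>t\<close>
  appears in \<open>t\<sigma>\<close> as \<open>(a (w\<sigma> y))\<close> with \<open>y : A\<close> and \<open>a : C\<close>, so \<open>w\<sigma>\<close> has type \<open>A \<rightarrow> C\<close>,
  and by induction \<open>w\<close> itself can be given type \<open>A \<rightarrow> C\<close> once \<open>a\<close> is declared
  with that type.  Since \<open>y\<close> is not free in \<open>t\<close>, its declaration can be dropped.\<close>

lemma swp_swp [simp]: "swp x z (swp x z v) = v"
  by (simp add: swp_def)

lemma inj_swp: "inj (swp x z)"
  by (metis injI swp_swp)

lemma vswap_vswap [simp]: "vswap x z (vswap x z t) = t"
  by (induction t) auto

lemma fvl_vswap: "fvl (vswap x z t) = swp x z ` fvl t"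
  by (induction t) (auto simp: image_set_diff[OF inj_swp])

lemma finite_avl: "finite (avl t)"
  by (induction t) auto

lemma fvl_subset_avl: "fvl t \<subseteq> avl t"
  by (induction t) auto

lemma fresh_for_notin: "fresh_for y t \<notin> insert y (avl t)"
  using Max_ge[OF finite_insert[THEN iffD2, OF finite_avl]]
  unfolding fresh_for_def by (meson not_less_eq_eq order_refl)

inductive_simps typing_Var: "typing \<Gamma> (Var x) B \<Delta>"
inductive_simps typing_Lam: "typing \<Gamma> (Lam x t) B \<Delta>"
inductive_simps typing_App: "typing \<Gamma> (App u v) B \<Delta>"
inductive_simps typing_Mu: "typing \<Gamma> (Mu b t) B \<Delta>"
inductive_simps typing_Named: "typing \<Gamma> (Named b t) B \<Delta>"

lemma typing_cong_fvl:
  "typing \<Gamma> t B \<Delta> \<Longrightarrow> (\<And>x. x \<in> fvl t \<Longrightarrow> \<Gamma> x = \<Gamma>' x) \<Longrightarrow> typing \<Gamma>' t B \<Delta>"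
  by (induction arbitrary: \<Gamma>' rule: typing.induct) (fastforce intro: typing.intros)+

lemma typing_vswap:
  "typing \<Gamma> t B \<Delta> \<Longrightarrow> typing (\<Gamma> \<circ> swp x z) (vswap x z t) B \<Delta>"
proof (induction rule: typing.induct)
  case (impI \<Gamma> v A t B \<Delta>)
  have "(\<Gamma>(v \<mapsto> A)) \<circ> swp x z = (\<Gamma> \<circ> swp x z)(swp x z v \<mapsto> A)"
    by (auto simp: fun_eq_iff)
  with impI.IH show ?case
    by (simp only: vswap.simps) (metis typing.impI)
next
  case mu
  show ?case
    using mu.IH unfolding vswap.simps by (rule typing.mu)
qed (auto intro: typing.intros)

lemma typing_rename_bound:
  assumes "z \<notin> avl t" and "typing (\<Gamma>(z \<mapsto> A)) (vswap x z t) B \<Delta>"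
  shows "typing (\<Gamma>(x \<mapsto> A)) t B \<Delta>"
proof (rule typing_cong_fvl)
  show "typing (\<Gamma>(z \<mapsto> A) \<circ> swp x z) t B \<Delta>"
    using typing_vswap[OF assms(2), of x z] by simp
  show "(\<Gamma>(z \<mapsto> A) \<circ> swp x z) v = (\<Gamma>(x \<mapsto> A)) v" if "v \<in> fvl t" for v
    using that assms(1) fvl_subset_avl by (auto simp: swp_def)
qed

lemma typing_drop_unused:
  "y \<notin> fvl t \<Longrightarrow> typing (\<Gamma>(y \<mapsto> A)) t B \<Delta> \<Longrightarrow> typing \<Gamma> t B \<Delta>"
  by (erule typing_cong_fvl) auto

lemma typing_msubst_Named_self:
  assumes "typing (\<Gamma>(y \<mapsto> A)) (msubst a y (Named a t)) B (\<Delta>(a \<mapsto> C))"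
  shows "B = Bot" and "typing (\<Gamma>(y \<mapsto> A)) (msubst a y t) (Arr A C) (\<Delta>(a \<mapsto> C))"
  using assms by (auto simp: typing_Named typing_App typing_Var)

lemma typing_unsubst:
  "y \<notin> fvl t \<Longrightarrow> typing (\<Gamma>(y \<mapsto> A)) (msubst a y t) B (\<Delta>(a \<mapsto> C))
   \<Longrightarrow> typing \<Gamma> t B (\<Delta>(a \<mapsto> Arr A C))"
proof (induction a y t arbitrary: \<Gamma> B \<Delta> rule: msubst.induct)
  case (1 a y x)
  then show ?case by (auto simp: typing_Var)
next
  case (2 a y x t)
  show ?case
  proof (cases "x = y")
    case True
    define z where "z = fresh_for y t"
    have z: "z \<notin> avl t" "z \<noteq> y"
      using fresh_for_notin[of y t] by (auto simp: z_def)
    have "msubst a y (Lam x t) = Lam z (msubst a y (vswap x z t))"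
      using True by (simp add: z_def Let_def)
    with "2.prems"(2) obtain A' B' where B: "B = Arr A' B'"
      and "typing (\<Gamma>(y \<mapsto> A, z \<mapsto> A')) (msubst a y (vswap x z t)) B' (\<Delta>(a \<mapsto> C))"
      by (auto simp only: typing_Lam)
    moreover have "\<Gamma>(y \<mapsto> A, z \<mapsto> A') = \<Gamma>(z \<mapsto> A', y \<mapsto> A)"
      using z(2) by (simp add: fun_upd_twist)
    moreover have "y \<notin> fvl (vswap x z t)"
      using True z fvl_subset_avl by (auto simp: fvl_vswap swp_def)
    ultimately have "typing (\<Gamma>(z \<mapsto> A')) (vswap x z t) B' (\<Delta>(a \<mapsto> Arr A C))"
      using "2.IH"(1)[OF True z_def] by metis
    then show ?thesis
      unfolding B by (intro typing.impI typing_rename_bound[OF z(1)])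
  next
    case False
    with "2.prems"(2) obtain A' B' where B: "B = Arr A' B'"
      and "typing (\<Gamma>(y \<mapsto> A, x \<mapsto> A')) (msubst a y t) B' (\<Delta>(a \<mapsto> C))"
      by (auto simp only: msubst.simps if_False typing_Lam)
    moreover have "\<Gamma>(y \<mapsto> A, x \<mapsto> A') = \<Gamma>(x \<mapsto> A', y \<mapsto> A)"
      using False by (simp add: fun_upd_twist)
    moreover have "y \<notin> fvl t"
      using False "2.prems"(1) by simp
    ultimately show ?thesis
      unfolding B using "2.IH"(2)[OF False] by (metis typing.impI)
  qed
next
  case (3 a y u v)
  from "3.prems"(2) obtain A' where
    u: "typing (\<Gamma>(y \<mapsto> A)) (msubst a y u) (Arr A' B) (\<Delta>(a \<mapsto> C))" and
    v: "typing (\<Gamma>(y \<mapsto> A)) (msubst a y v) A' (\<Delta>(a \<mapsto> C))"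
    by (auto simp only: msubst.simps typing_App)
  have "y \<notin> fvl u" "y \<notin> fvl v"
    using "3.prems"(1) by auto
  then show ?case
    using "3.IH"(1)[OF _ u] "3.IH"(2)[OF _ v] by (blast intro: typing.impE)
next
  case (4 a y b t)
  have "msubst a y (Mu b t) = Mu b (if b = a then t else msubst a y t)"
    by simp
  with "4.prems"(2) have T:
    "typing (\<Gamma>(y \<mapsto> A)) (if b = a then t else msubst a y t) Bot (\<Delta>(a \<mapsto> C, b \<mapsto> B))"
    by (simp only: typing_Mu)
  show ?case
  proof (cases "b = a")
    case True
    then have "typing (\<Gamma>(y \<mapsto> A)) t Bot (\<Delta>(a \<mapsto> Arr A C, b \<mapsto> B))"
      using T by simp
    then have "typing \<Gamma> t Bot (\<Delta>(a \<mapsto> Arr A C, b \<mapsto> B))"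
      using "4.prems"(1) by (simp add: typing_drop_unused)
    then show ?thesis by (rule typing.mu)
  next
    case False
    then have twist: "\<Delta>'(a \<mapsto> C', b \<mapsto> B) = \<Delta>'(b \<mapsto> B, a \<mapsto> C')" for \<Delta>' C'
      by (simp add: fun_upd_twist)
    from T False have "typing (\<Gamma>(y \<mapsto> A)) (msubst a y t) Bot (\<Delta>(b \<mapsto> B, a \<mapsto> C))"
      by (simp only: if_False twist)
    moreover have "y \<notin> fvl t"
      using "4.prems"(1) by simp
    ultimately have "typing \<Gamma> t Bot (\<Delta>(b \<mapsto> B, a \<mapsto> Arr A C))"
      using "4.IH"[OF False] by blast
    then show ?thesis by (simp only: twist typing.mu)
  qed
next
  case (5 a y b t)
  have y: "y \<notin> fvl t" using "5.prems"(1) by simp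
  show ?case
  proof (cases "b = a")
    case True
    with "5.prems"(2) have "B = Bot"
      and "typing (\<Gamma>(y \<mapsto> A)) (msubst a y t) (Arr A C) (\<Delta>(a \<mapsto> C))"
      by (simp_all only: typing_msubst_Named_self)
    with "5.IH"(1)[OF True y] True show ?thesis
      by (metis fun_upd_same typing.bot)
  next
    case False
    with "5.prems"(2) obtain A' where B: "B = Bot"
      and "\<Delta> b = Some A'"
      and T: "typing (\<Gamma>(y \<mapsto> A)) (msubst a y t) A' (\<Delta>(a \<mapsto> C))"
      by (auto simp only: msubst.simps False if_False typing_Named fun_upd_other)
    moreover have "(\<Delta>(a \<mapsto> Arr A C)) b = Some A'"
      using False calculation(2) by simp
    ultimately show ?thesis
      using "5.IH"(2)[OF False y T] by (blast intro: typing.bot)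
  qed
qed

theorem mainTheorem19:
  fixes t :: trm and y a :: nat and A B C :: ty
    and \<Gamma> \<Delta> :: "nat \<rightharpoonup> ty"
  assumes "normal t"
    and "y \<notin> fvl t"
    and "typing (\<Gamma>(y \<mapsto> A)) (msubst a y t) B (\<Delta>(a \<mapsto> C))"
  shows "typing \<Gamma> t B (\<Delta>(a \<mapsto> Arr A C))"
  using typing_unsubst assms(2,3) .

end
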